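(* Let $F$ be a Ferrers diagram, $T\in\mathsf{EWtab}(F)$, $S=S(T)$, and let $(j,k)$ be a cell of $F$ ($j\in\mathsf{rows}(F)$, $k\in\mathsf{cols}(F)$). Then $T_{jk}$ is a cornersupport in $T$ if and only if there exists a cell $(j',k')$ of $F$ with $j'\ne j$, $k'\ne k$ such that: when $T_{jk}=0$, we have $T_{j'k'}=1$, $T_{jk'}=0$ (with $(j,k')$ a cell of $F$) and $S_{j'k}=0$; when $T_{jk}=1$, we have $T_{j'k'}=0$, $T_{j'k}=1$ (with $(j',k)$ a cell of $F$) and $S_{jk'}=1$.
   Context: Ferrers diagrams and graphs: a Ferrers diagram $F$ (English convention) of semiperimeter $n+1$ has rows and columns labeled by $0,\ldots,n$: the $n+1$ unit steps of its south-east boundary path, traversed from top-right to bottom-left, are labeled $0,\ldots,n$; a vertical step labels the row it bounds, a horizontal step the column it bounds (top row labeled $0$). $\mathsf{rows}(F)$, $\mathsf{cols}(F)$ are the label sets; $F$ has a cell in row $i$, column $j$ iff $i<j$. $G(F)$ has vertex set $\{0,\ldots,n\}$ with edges $\{i,j\}$ for $i\in\mathsf{rows}(F)$, $j\in\mathsf{cols}(F)$, $i<j$. Sandpile model on $G(F)$ with sink $0$: configurations $c\in\mathbb{N}^n$; non-sink $v$ unstable if $c_v\ge\deg(v)$; toppling sends one grain to each neighbour (grains to $0$ disappear); toppling the sink adds one grain to each neighbour of $0$. Canonical toppling of a recurrent configuration $c$: topple the sink ($U^{(0)}_c=\{0\}$), then alternately topple simultaneously all unstable vertices in $\mathsf{cols}(F)$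 ($V^{(1)}_c$), all unstable in $\mathsf{rows}(F)$ ($U^{(1)}_c$), etc.; $\mathsf{CanonTop}(c)=(U^{(0)}_c,V^{(1)}_c,U^{(1)}_c,\ldots)$ is an ordered partition of $\{0,\ldots,n\}$. EW-tableaux: $0/1$-fillings $T$ of $F$ ($T_{ij}$ = entry in row $i$, column $j$) with top row all 1s, a 0 in every other row, and no rectangle with 0s in two diagonally opposite corners and 1s in the other two; $\mathsf{EWtab}(F)$ is their set. $\phi_{TC}(T)$ is the (recurrent) configuration with $c_i$ = number of 1s in row $i$ ($i\in\mathsf{rows}(F)$), $c_i$ = number of 0s in column $i$ ($i\in\mathsf{cols}(F)$). $\mathsf{CanonTop}(T):=\mathsf{CanonTop}(\phi_{TC}(T))$. Supplementary tableau $S=S(T)$: the $|\mathsf{rows}(F)|\times|\mathsf{cols}(F)|$ array with $S_{ij}=1$ if row label $i$ lies in an earlier block of $\mathsf{CanonTop}(T)$ than column label $j$, else $0$ (it agrees with $T$ on cells of $F$). An entry $x$ of $T$ at $(j,k)$ is a cornersupport entry (the cell is a cornersupport) iff there exist a row $j'\ne j$ and column $k'\ne k$ with $S_{j'k'}\ne x$ and $S_{j'k}=S_{jk'}=x$. *)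

theory Defs
  imports Main
begin

text \<open>A Ferrers diagram of semiperimeter n+1 is encoded by n and its set R of row
labels (a subset of {0..n}); the column labels are the remaining labels.
The boundary path starts with a vertical step (row 0) and ends with a
horizontal step (column n).\<close>

definition ferrers :: "nat \<Rightarrow> nat set \<Rightarrow> bool" where
  "ferrers n R \<longleftrightarrow> 1 \<le> n \<and> R \<subseteq> {0..n} \<and> 0 \<in> R \<and> n \<notin> R"

definition colset :: "nat \<Rightarrow> nat set \<Rightarrow> nat set" where
  "colset n R = {0..n} - R"

definition is_cell :: "nat \<Rightarrow> nat set \<Rightarrow> nat \<Rightarrow> nat \<Rightarrow> bool" where
  "is_cell n R i j \<longleftrightarrow> i \<in> R \<and> j \<in> colset n R \<and> i < j"

definition adj :: "nat \<Rightarrow> nat set \<Rightarrow> nat \<Rightarrow> nat \<Rightarrow> bool" where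
  "adj n R v w \<longleftrightarrow> is_cell n R v w \<or> is_cell n R w v"

definition gdeg :: "nat \<Rightarrow> nat set \<Rightarrow> nat \<Rightarrow> nat" where
  "gdeg n R v = card {w \<in> {0..n}. adj n R v w}"

text \<open>Simultaneous toppling of a set A of vertices (the value at the sink 0 is
irrelevant, grains sent to 0 are ignored by never looking at that value).\<close>
definition topple :: "nat \<Rightarrow> nat set \<Rightarrow> nat set \<Rightarrow> (nat \<Rightarrow> int) \<Rightarrow> (nat \<Rightarrow> int)" where
  "topple n R A c = (\<lambda>w. c w - (if w \<in> A then int (gdeg n R w) else 0)
                          + int (card {a \<in> A. a \<le> n \<and> adj n R a w}))"

definition unstable_in :: "nat \<Rightarrow> nat set \<Rightarrow> nat set \<Rightarrow> (nat \<Rightarrow> int) \<Rightarrow> nat set" where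
  "unstable_in n R X c = {v \<in> X. 0 < v \<and> v \<le> n \<and> int (gdeg n R v) \<le> c v}"

text \<open>canon_state n R c k = (k-th block of the canonical toppling, configuration after it).
Block 0 is U0 = {0}; odd blocks are V(1), V(2), ... (columns), even blocks k >= 2 are
U(1), U(2), ... (rows).\<close>
primrec canon_state :: "nat \<Rightarrow> nat set \<Rightarrow> (nat \<Rightarrow> int) \<Rightarrow> nat \<Rightarrow> nat set \<times> (nat \<Rightarrow> int)" where
  "canon_state n R c 0 = ({0}, topple n R {0} c)"
| "canon_state n R c (Suc k) =
     (let c' = snd (canon_state n R c k);
          B = unstable_in n R (if even k then colset n R else R) c'
      in (B, topple n R B c'))"

definition canon_block :: "nat \<Rightarrow> nat set \<Rightarrow> (nat \<Rightarrow> int) \<Rightarrow> nat \<Rightarrow> nat set" where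
  "canon_block n R c k = fst (canon_state n R c k)"

definition block_index :: "nat \<Rightarrow> nat set \<Rightarrow> (nat \<Rightarrow> int) \<Rightarrow> nat \<Rightarrow> nat" where
  "block_index n R c v = (LEAST k. v \<in> canon_block n R c k)"

text \<open>EW-tableaux: 0/1 fillings (True = 1), False outside the cells.\<close>
definition EWtab :: "nat \<Rightarrow> nat set \<Rightarrow> (nat \<Rightarrow> nat \<Rightarrow> bool) set" where
  "EWtab n R = {T.
     (\<forall>i j. \<not> is_cell n R i j \<longrightarrow> \<not> T i j) \<and>
     (\<forall>j. is_cell n R 0 j \<longrightarrow> T 0 j) \<and>
     (\<forall>i\<in>R. i \<noteq> 0 \<longrightarrow> (\<exists>j. is_cell n R i j \<and> \<not> T i j)) \<and>
     (\<forall>i i' j j'. is_cell n R i j \<and> is_cell n R i j' \<and> is_cell n R i' j \<and> is_cell n R i' j'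
        \<longrightarrow> \<not> (\<not> T i j \<and> \<not> T i' j' \<and> T i j' \<and> T i' j))}"

definition phiTC :: "nat \<Rightarrow> nat set \<Rightarrow> (nat \<Rightarrow> nat \<Rightarrow> bool) \<Rightarrow> (nat \<Rightarrow> int)" where
  "phiTC n R T = (\<lambda>i.
     if i = 0 \<or> n < i then 0
     else if i \<in> R then int (card {j. is_cell n R i j \<and> T i j})
     else int (card {r. is_cell n R r i \<and> \<not> T r i}))"

definition suppl :: "nat \<Rightarrow> nat set \<Rightarrow> (nat \<Rightarrow> nat \<Rightarrow> bool) \<Rightarrow> nat \<Rightarrow> nat \<Rightarrow> bool" where
  "suppl n R T i j \<longleftrightarrow> block_index n R (phiTC n R T) i < block_index n R (phiTC n R T) j"

definition cornersupport :: "nat \<Rightarrow> nat set \<Rightarrow> (nat \<Rightarrow> nat \<Rightarrow> bool) \<Rightarrow> nat \<Rightarrow> nat \<Rightarrow> bool" where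
  "cornersupport n R T j k \<longleftrightarrow>
     (\<exists>j'\<in>R. \<exists>k'\<in>colset n R. j' \<noteq> j \<and> k' \<noteq> k \<and>
        suppl n R T j' k' \<noteq> T j k \<and> suppl n R T j' k = T j k \<and> suppl n R T j k' = T j k)"

end

theory Submission
  imports Defs
begin

text \<open>Orient each edge of G(F) by the filling: r \<rightarrow> c if T r c = 1 and c \<rightarrow> r if
  T r c = 0.  Then phiTC T is the out-degree, and by induction over the rounds of the
  canonical toppling the set of toppled vertices stays closed under predecessors; hence a
  vertex topples in the first round of its kind (rows or columns) after all of its
  in-neighbours.  The rectangle condition makes the orientation acyclic, so every vertex
  topples.  Writing t for the block index, rows have even and columns odd t, every arc
  increases t (so S extends T), and every vertex v \<noteq> 0 has an in-neighbour at time
  t v - 1.  Consequently both the cornersupport condition and the cell condition for (j, k)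
  say exactly that t j and t k differ by at least 3; the witnesses for the cell condition
  are the parent and grandparent of j (if T j k = 0) or of k (if T j k = 1).\<close>

lemma topple_topple:
  assumes "B \<inter> D = {}"
  shows "topple n R B (topple n R D c) = topple n R (D \<union> B) c"
proof
  fix w
  let ?nbrs = "\<lambda>A. {a \<in> A. a \<le> n \<and> adj n R a w}"
  have fin: "finite (?nbrs A)" for A
    by (rule finite_subset[of _ "{..n}"]) auto
  have "?nbrs (D \<union> B) = ?nbrs D \<union> ?nbrs B" and "?nbrs D \<inter> ?nbrs B = {}"
    using assms by auto
  then have "card (?nbrs (D \<union> B)) = card (?nbrs D) + card (?nbrs B)"
    using fin by (simp add: card_Un_disjoint)
  then show "topple n R B (topple n R D c) w = topple n R (D \<union> B) c w"
    using assms by (auto simp: topple_def)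
qed

locale ew_tableau =
  fixes n :: nat and R :: "nat set" and T :: "nat \<Rightarrow> nat \<Rightarrow> bool"
  assumes ferrers: "ferrers n R" and ew: "T \<in> EWtab n R"
begin

lemma T_top_row: "is_cell n R 0 j \<Longrightarrow> T 0 j"
  using ew by (auto simp: EWtab_def)

lemma row_has_zero: "i \<in> R \<Longrightarrow> i \<noteq> 0 \<Longrightarrow> \<exists>j. is_cell n R i j \<and> \<not> T i j"
  using ew by (auto simp: EWtab_def)

lemma no_diagonal_rectangle:
  "is_cell n R i j \<Longrightarrow> is_cell n R i j' \<Longrightarrow> is_cell n R i' j \<Longrightarrow> is_cell n R i' j'
    \<Longrightarrow> \<not> T i j \<Longrightarrow> \<not> T i' j' \<Longrightarrow> T i j' \<Longrightarrow> T i' j \<Longrightarrow> False"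
  using ew unfolding EWtab_def by blast

lemma zero_in_R: "0 \<in> R"
  using ferrers by (simp add: ferrers_def)

lemma vertex_cases: "v \<le> n \<Longrightarrow> v \<in> R \<or> v \<in> colset n R"
  by (auto simp: colset_def)

lemma in_R_le: "v \<in> R \<Longrightarrow> v \<le> n"
  using ferrers by (auto simp: ferrers_def)

lemma in_colset_le: "v \<in> colset n R \<Longrightarrow> v \<le> n"
  by (simp add: colset_def)

lemma colset_not_in_R: "v \<in> colset n R \<Longrightarrow> v \<notin> R"
  by (simp add: colset_def)

lemma cellD: "is_cell n R i j \<Longrightarrow> i \<in> R \<and> j \<in> colset n R \<and> i < j"
  by (simp add: is_cell_def)

definition arc :: "nat \<Rightarrow> nat \<Rightarrow> bool" where
  "arc u v \<longleftrightarrow> is_cell n R u v \<and> T u v \<or> is_cell n R v u \<and> \<not> T v u"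

lemma arc_into_row: "v \<in> R \<Longrightarrow> arc u v \<longleftrightarrow> is_cell n R v u \<and> \<not> T v u"
  by (auto simp: arc_def is_cell_def colset_def)

lemma arc_into_colset: "v \<in> colset n R \<Longrightarrow> arc u v \<longleftrightarrow> is_cell n R u v \<and> T u v"
  by (auto simp: arc_def is_cell_def colset_def)

lemma arc_bipartite: "arc u v \<Longrightarrow> u \<in> R \<and> v \<in> colset n R \<or> u \<in> colset n R \<and> v \<in> R"
  by (auto simp: arc_def is_cell_def)

lemma arc_le: "arc u v \<Longrightarrow> u \<le> n \<and> v \<le> n"
  using arc_bipartite in_R_le in_colset_le by blast

lemma not_arc_sym: "arc u v \<Longrightarrow> \<not> arc v u"
  by (auto simp: arc_def is_cell_def)

lemma not_arc_into_zero: "\<not> arc u 0"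
  using zero_in_R T_top_row by (simp add: arc_into_row)

lemma adj_iff_arc: "adj n R u v \<longleftrightarrow> arc u v \<or> arc v u"
  by (auto simp: adj_def arc_def)

lemma in_arc_exists:
  assumes "0 < v" "v \<le> n"
  shows "\<exists>u. arc u v"
  using vertex_cases[OF assms(2)]
proof
  assume "v \<in> R"
  then show ?thesis using row_has_zero assms(1) arc_into_row by blast
next
  assume "v \<in> colset n R"
  then have "is_cell n R 0 v" using zero_in_R assms(1) by (simp add: is_cell_def)
  then show ?thesis using T_top_row \<open>v \<in> colset n R\<close> arc_into_colset by blast
qed

lemma finite_arcs: "finite {u. arc u v}" "finite {w. arc v w}"
  using arc_le by (metis (mono_tags) finite_nat_set_iff_bounded_le mem_Collect_eq)+

lemma gdeg_eq_card_arcs: "gdeg n R v = card {u. arc u v} + card {w. arc v w}"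
proof -
  have "{w \<in> {0..n}. adj n R v w} = {u. arc u v} \<union> {w. arc v w}"
    by (auto simp: adj_iff_arc dest: arc_le)
  then show ?thesis
    unfolding gdeg_def using finite_arcs not_arc_sym by (simp add: card_Un_disjoint disjoint_iff)
qed

lemma phiTC_eq_card_out_arcs:
  assumes "0 < v" "v \<le> n"
  shows "phiTC n R T v = int (card {w. arc v w})"
  using vertex_cases[OF assms(2)]
proof
  assume v: "v \<in> R"
  have "{w. arc v w} = {j. is_cell n R v j \<and> T v j}"
    using v by (auto simp: arc_def is_cell_def colset_def)
  then show ?thesis using v assms by (simp add: phiTC_def)
next
  assume v: "v \<in> colset n R"
  have "{w. arc v w} = {r. is_cell n R r v \<and> \<not> T r v}"
    using v by (auto simp: arc_def is_cell_def colset_def)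
  then show ?thesis using v assms colset_not_in_R by (simp add: phiTC_def)
qed

definition down_closed :: "nat set \<Rightarrow> bool" where
  "down_closed D \<longleftrightarrow> (\<forall>u v. arc u v \<longrightarrow> v \<in> D \<longrightarrow> u \<in> D)"

lemma unstable_after_topple_iff:
  assumes D: "down_closed D" and v: "0 < v" "v \<le> n"
  shows "int (gdeg n R v) \<le> topple n R D (phiTC n R T) v \<longleftrightarrow> v \<notin> D \<and> {u. arc u v} \<subseteq> D"
proof -
  define Ins where "Ins = {u. arc u v}"
  define Outs where "Outs = {w. arc v w}"
  have fin: "finite Ins" "finite Outs" using finite_arcs by (simp_all add: Ins_def Outs_def)
  have "Ins \<noteq> {}" using in_arc_exists[OF v] by (simp add: Ins_def)
  then have "card Ins > 0" using fin by auto
  have nbrs: "{a \<in> D. a \<le> n \<and> adj n R a v} = D \<inter> (Ins \<union> Outs)"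
    by (auto simp: Ins_def Outs_def adj_iff_arc dest: arc_le)
  have top: "topple n R D (phiTC n R T) v
      = int (card Outs) - (if v \<in> D then int (card Ins + card Outs) else 0)
        + int (card (D \<inter> (Ins \<union> Outs)))"
    using phiTC_eq_card_out_arcs[OF v] nbrs unfolding topple_def
    by (simp add: gdeg_eq_card_arcs Ins_def Outs_def)
  have deg: "gdeg n R v = card Ins + card Outs" by (simp add: gdeg_eq_card_arcs Ins_def Outs_def)
  show ?thesis
  proof (cases "v \<in> D")
    case True
    have "card (D \<inter> (Ins \<union> Outs)) \<le> card (Ins \<union> Outs)"
      using fin by (intro card_mono) auto
    also have "\<dots> \<le> card Ins + card Outs"
      by (rule card_Un_le)
    finally have "\<not> int (gdeg n R v) \<le> topple n R D (phiTC n R T) v"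
      using True top deg \<open>card Ins > 0\<close> by simp
    then show ?thesis using True by simp
  next
    case False
    have "D \<inter> Outs = {}"
      using D False by (auto simp: down_closed_def Outs_def)
    then have "D \<inter> (Ins \<union> Outs) = D \<inter> Ins" by blast
    moreover have "card Ins \<le> card (D \<inter> Ins) \<longleftrightarrow> Ins \<subseteq> D"
    proof
      assume "card Ins \<le> card (D \<inter> Ins)"
      then have "D \<inter> Ins = Ins"
        using fin by (intro card_subset_eq) (auto dest: card_mono[of Ins "D \<inter> Ins"])
      then show "Ins \<subseteq> D" by blast
    next
      assume "Ins \<subseteq> D"
      then show "card Ins \<le> card (D \<inter> Ins)" by (simp add: Int_absorb1)
    qed
    ultimately show ?thesis
      using False top deg by (simp add: Ins_def)
  qed
qed

abbreviation block :: "nat \<Rightarrow> nat set" where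
  "block \<equiv> canon_block n R (phiTC n R T)"

definition toppled :: "nat \<Rightarrow> nat set" where
  "toppled k = (\<Union>m\<le>k. block m)"

lemma block_0: "block 0 = {0}"
  by (simp add: canon_block_def)

lemma toppled_0: "toppled 0 = {0}"
  by (simp add: toppled_def block_0)

lemma toppled_Suc: "toppled (Suc k) = toppled k \<union> block (Suc k)"
  by (auto simp: toppled_def atMost_Suc)

lemma toppled_mono: "m \<le> k \<Longrightarrow> toppled m \<subseteq> toppled k"
  unfolding toppled_def by (rule UN_mono) auto

lemma unstable_in_topple:
  assumes "down_closed D"
  shows "unstable_in n R X (topple n R D (phiTC n R T))
    = {v \<in> X. 0 < v \<and> v \<le> n \<and> v \<notin> D \<and> {u. arc u v} \<subseteq> D}"
  unfolding unstable_in_def by (auto simp: unstable_after_topple_iff[OF assms])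

lemma canon_state_toppled:
  "snd (canon_state n R (phiTC n R T) k) = topple n R (toppled k) (phiTC n R T)
    \<and> down_closed (toppled k)"
proof (induction k)
  case 0
  then show ?case using not_arc_into_zero by (simp add: toppled_0 down_closed_def)
next
  case (Suc k)
  define D where "D = toppled k"
  define B where "B = block (Suc k)"
  have closed: "down_closed D"
    and state: "snd (canon_state n R (phiTC n R T) k) = topple n R D (phiTC n R T)"
    using Suc.IH by (simp_all add: D_def)
  have B: "B = {v \<in> (if even k then colset n R else R).
      0 < v \<and> v \<le> n \<and> v \<notin> D \<and> {u. arc u v} \<subseteq> D}"
    unfolding B_def canon_block_def using state unstable_in_topple[OF closed] by (simp add: Let_def)
  have "snd (canon_state n R (phiTC n R T) (Suc k)) = topple n R B (topple n R D (phiTC n R T))"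
    using state by (simp add: B_def canon_block_def Let_def)
  also have "\<dots> = topple n R (toppled (Suc k)) (phiTC n R T)"
  proof -
    have "B \<inter> D = {}" using B by blast
    then show ?thesis by (simp add: topple_topple toppled_Suc D_def B_def)
  qed
  moreover have "down_closed (toppled (Suc k))"
    using closed unfolding down_closed_def toppled_Suc D_def[symmetric] B_def[symmetric] B
    by blast
  ultimately show ?case by simp
qed

lemma block_Suc:
  "block (Suc k) = {v \<in> (if even k then colset n R else R).
     0 < v \<and> v \<le> n \<and> v \<notin> toppled k \<and> {u. arc u v} \<subseteq> toppled k}"
  using canon_state_toppled[of k] unstable_in_topple[of "toppled k"]
  by (simp add: canon_block_def Let_def)

lemma block_unique:
  assumes "v \<in> block a" "v \<in> block b"
  shows "a = b"
proof -
  have False if "v \<in> block a" "v \<in> block b" "a < b" for a b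
  proof -
    obtain b' where "b = Suc b'" "a \<le> b'" using \<open>a < b\<close> by (cases b) auto
    then show False using that by (auto simp: block_Suc toppled_def)
  qed
  then show ?thesis using assms by (metis linorder_neqE_nat)
qed

definition topple_time :: "nat \<Rightarrow> nat" where
  "topple_time v = block_index n R (phiTC n R T) v"

lemma topple_time_eq: "v \<in> block k \<Longrightarrow> topple_time v = k"
  unfolding topple_time_def block_index_def
  by (rule Least_equality) (auto dest: block_unique)

lemma topple_time_zero: "topple_time 0 = 0"
  by (simp add: topple_time_eq block_0)

lemma toppled_iff: "v \<in> toppled k \<longleftrightarrow> (\<exists>m\<le>k. v \<in> block m)"
  by (auto simp: toppled_def)

lemma sourceless_set_empty:
  assumes "finite U" and "\<And>v. v \<in> U \<Longrightarrow> \<exists>u\<in>U. arc u v"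
  shows "U = {}"
  using assms
proof (induction "card U" arbitrary: U rule: less_induct)
  case less
  show ?case
  proof (rule ccontr)
    assume "U \<noteq> {}"
    then obtain u v where "u \<in> U" "v \<in> U" "arc u v" using less.prems(2) by blast
    then have cols: "U \<inter> colset n R \<noteq> {}" using arc_bipartite by blast
    define m where "m = Max (U \<inter> colset n R)"
    have m: "m \<in> U" "m \<in> colset n R"
      using Max_in[OF _ cols] less.prems(1) by (auto simp: m_def)
    have m_max: "c \<le> m" if "c \<in> U" "c \<in> colset n R" for c
      using that less.prems(1) by (simp add: m_def)
    txt \<open>U' is again sourceless: a column c holding a 0 of a row r with T r m = 1 lies in
      U', since any row r' with a 1 in c also has a 1 in m, by the rectangle condition on
      rows r, r' and columns c < m.\<close>
    define U' where
      "U' = {r \<in> U. arc r m} \<union> {c \<in> U \<inter> colset n R - {m}. \<forall>r\<in>U. arc r c \<longrightarrow> arc r m}"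
    have zero_in_U': "c \<in> U'" if r: "r \<in> U" "arc r m" and c: "c \<in> U" "arc c r" for r c
    proof -
      have rR: "r \<in> R" using r(2) m(2) arc_bipartite colset_not_in_R by blast
      have "T r m" using r(2) m(2) arc_into_colset by simp
      have rc: "is_cell n R r c" "\<not> T r c" using c(2) rR arc_into_row by auto
      then have cC: "c \<in> colset n R" and "c \<noteq> m" using cellD \<open>T r m\<close> by auto
      then have "c < m" using m_max c(1) by force
      have "arc r' m" if "r' \<in> U" "arc r' c" for r'
      proof -
        have r'c: "is_cell n R r' c" "T r' c" using that(2) cC arc_into_colset by auto
        then have r'm: "is_cell n R r' m" using \<open>c < m\<close> m(2) by (auto simp: is_cell_def)
        have "is_cell n R r m" using r(2) m(2) arc_into_colset by simp
        then have "T r' m"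
          using no_diagonal_rectangle[of r c m r'] rc r'c r'm \<open>T r m\<close> by blast
        then show ?thesis using r'm m(2) arc_into_colset by simp
      qed
      then show ?thesis using c(1) cC \<open>c \<noteq> m\<close> by (simp add: U'_def)
    qed
    have "U' = {}"
    proof (rule less.hyps)
      have "U' \<subseteq> U - {m}" using not_arc_sym by (auto simp: U'_def)
      then have "U' \<subset> U" using m(1) by blast
      then show "card U' < card U" "finite U'"
        using less.prems(1) by (simp_all add: psubset_card_mono rev_finite_subset)
      show "\<exists>u\<in>U'. arc u w" if "w \<in> U'" for w
      proof (cases "arc w m")
        case True
        have "w \<in> U" using that by (auto simp: U'_def)
        then obtain c where "c \<in> U" "arc c w" using less.prems(2) by blast
        then show ?thesis using zero_in_U' True \<open>w \<in> U\<close> by blast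
      next
        case False
        then have "w \<in> U" "\<forall>r\<in>U. arc r w \<longrightarrow> arc r m" using that by (auto simp: U'_def)
        then obtain r where "r \<in> U" "arc r w" "arc r m" using less.prems(2) by blast
        then show ?thesis by (auto simp: U'_def)
      qed
    qed
    moreover obtain r where "r \<in> U" "arc r m" using less.prems(2) m(1) by blast
    ultimately show False by (simp add: U'_def)
  qed
qed

lemma block_topple_time:
  assumes "v \<le> n"
  shows "v \<in> block (topple_time v)"
proof -
  define U where "U = {v. v \<le> n \<and> (\<forall>k. v \<notin> block k)}"
  have "U = {}"
  proof (rule sourceless_set_empty)
    show "finite U" by (simp add: U_def)
    fix w assume w: "w \<in> U"
    show "\<exists>u\<in>U. arc u w"
    proof (rule ccontr)
      assume no_source: "\<not> (\<exists>u\<in>U. arc u w)"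
      txt \<open>Then all in-neighbours of w topple by some round K, and w would topple in
        round K + 1 or K + 2.\<close>
      define K where "K = Max (topple_time ` {u. arc u w})"
      have in_nbrs_toppled: "{u. arc u w} \<subseteq> toppled K"
      proof
        fix u assume "u \<in> {u. arc u w}"
        then have "arc u w" "u \<notin> U" using no_source by auto
        then obtain k where "u \<in> block k" using arc_le by (auto simp: U_def)
        moreover have "topple_time u \<le> K"
          using finite_arcs \<open>arc u w\<close> by (auto simp: K_def intro!: Max_ge)
        ultimately show "u \<in> toppled K" using topple_time_eq by (auto simp: toppled_iff)
      qed
      have w_never: "w \<notin> toppled k" for k using w by (simp add: U_def toppled_iff)
      have "0 < w" using w block_0 by (auto simp: U_def)
      obtain K' where "K \<le> K'" "w \<in> (if even K' then colset n R else R)"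
      proof (cases "w \<in> (if even K then colset n R else R)")
        case True
        then show ?thesis using that by blast
      next
        case False
        then have "w \<in> (if even (Suc K) then colset n R else R)"
          using vertex_cases[of w] w by (auto simp: U_def)
        then show ?thesis using that le_SucI by blast
      qed
      then have "w \<in> block (Suc K')"
        using in_nbrs_toppled toppled_mono w_never \<open>0 < w\<close> w
        unfolding block_Suc U_def by blast
      then show False using w by (simp add: U_def)
    qed
  qed
  then show ?thesis using assms topple_time_eq by (auto simp: U_def)
qed

lemma even_topple_time_iff:
  assumes "v \<le> n"
  shows "even (topple_time v) \<longleftrightarrow> v \<in> R"
proof (cases "topple_time v")
  case 0
  then have "v = 0" using block_topple_time[OF assms] by (simp add: block_0)
  then show ?thesis using 0 zero_in_R by simp
next
  case (Suc k)
  then have "v \<in> (if even k then colset n R else R)"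
    using block_topple_time[OF assms] by (simp add: block_Suc)
  then show ?thesis using Suc colset_not_in_R by (auto split: if_splits)
qed

lemma topple_time_row_neq_col: "r \<in> R \<Longrightarrow> c \<in> colset n R \<Longrightarrow> topple_time r \<noteq> topple_time c"
  using even_topple_time_iff in_R_le in_colset_le colset_not_in_R by metis

lemma arc_topple_time_parity: "arc u v \<Longrightarrow> even (topple_time u) \<longleftrightarrow> odd (topple_time v)"
  using arc_bipartite arc_le even_topple_time_iff colset_not_in_R by metis

lemma arc_topple_time_less:
  assumes "arc u v"
  shows "topple_time u < topple_time v"
proof -
  have v: "v \<in> block (topple_time v)" using block_topple_time arc_le assms by blast
  obtain k where k: "topple_time v = Suc k"
    using v not_arc_into_zero assms block_0 by (cases "topple_time v") auto
  then have "{u. arc u v} \<subseteq> toppled k" using v by (simp add: block_Suc)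
  then have "u \<in> toppled k" using assms by blast
  then show ?thesis using k topple_time_eq by (auto simp: toppled_iff)
qed

lemma T_iff_topple_time_less:
  assumes "is_cell n R r c"
  shows "T r c \<longleftrightarrow> topple_time r < topple_time c"
proof
  assume "T r c"
  then show "topple_time r < topple_time c"
    using assms arc_topple_time_less by (simp add: arc_def)
next
  assume "topple_time r < topple_time c"
  then show "T r c"
    using assms arc_topple_time_less[of c r] by (auto simp: arc_def)
qed

lemma parent_exists:
  assumes "0 < v" "v \<le> n"
  obtains u where "arc u v" "Suc (topple_time u) = topple_time v"
proof -
  have v: "v \<in> block (topple_time v)" using block_topple_time assms(2) .
  obtain k where k: "topple_time v = Suc k"
    using v assms(1) block_0 by (cases "topple_time v") auto
  have "\<exists>u. arc u v \<and> topple_time u = k"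
  proof (rule ccontr)
    assume none: "\<not> (\<exists>u. arc u v \<and> topple_time u = k)"
    txt \<open>By parity all in-neighbours of v then topple by round k - 2, so v would already
      topple in round k - 1.\<close>
    have early: "topple_time u + 2 \<le> k" if "arc u v" for u
    proof -
      have "topple_time u < Suc k" "topple_time u \<noteq> k" "even (topple_time u) \<longleftrightarrow> even k"
        using arc_topple_time_less[OF that] arc_topple_time_parity[OF that] none that k by auto
      then show ?thesis by (cases "Suc (topple_time u) = k") auto
    qed
    obtain u where "arc u v" using in_arc_exists assms by blast
    then have "2 \<le> k" using early by fastforce
    define j where "j = k - 2"
    have j: "k = Suc (Suc j)" using \<open>2 \<le> k\<close> by (simp add: j_def)
    have "{u. arc u v} \<subseteq> toppled j"
    proof
      fix u assume "u \<in> {u. arc u v}"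
      then have "u \<in> block (topple_time u)" "topple_time u \<le> j"
        using early block_topple_time arc_le j by auto
      then show "u \<in> toppled j" by (auto simp: toppled_iff)
    qed
    moreover have "v \<notin> toppled j" "v \<in> (if even j then colset n R else R)"
      using v k j toppled_mono[of j k] by (auto simp: block_Suc)
    ultimately have "v \<in> block (Suc j)" using assms by (simp add: block_Suc)
    then show False using k j topple_time_eq by simp
  qed
  then show ?thesis using that k by auto
qed

lemma grandparent_exists:
  assumes "v \<le> n" "2 \<le> topple_time v"
  obtains u w where "arc u w" "arc w v"
    "topple_time u + 2 = topple_time v" "topple_time w + 1 = topple_time v"
proof -
  have "0 < v" using assms(2) topple_time_zero by (cases v) auto
  then obtain w where w: "arc w v" "Suc (topple_time w) = topple_time v"
    using parent_exists assms(1) by blast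
  have "0 < w" using w(2) assms(2) topple_time_zero by (cases w) auto
  then obtain u where u: "arc u w" "Suc (topple_time u) = topple_time w"
    using parent_exists arc_le w(1) by blast
  show ?thesis using that u w by simp
qed

lemma suppl_iff: "suppl n R T i j \<longleftrightarrow> topple_time i < topple_time j"
  by (simp add: suppl_def topple_time_def)

lemma cornersupport_imp_gap:
  assumes cell: "is_cell n R j k" and "cornersupport n R T j k"
  shows "topple_time k + 3 \<le> topple_time j \<or> topple_time j + 3 \<le> topple_time k"
proof -
  obtain j' k' where j'k': "j' \<in> R" "k' \<in> colset n R"
    and S: "suppl n R T j' k' \<noteq> T j k" "suppl n R T j' k = T j k" "suppl n R T j k' = T j k"
    using assms(2) by (auto simp: cornersupport_def)
  have "j \<in> R" "k \<in> colset n R" using cellD[OF cell] by auto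
  then have "topple_time j' \<noteq> topple_time k'" "topple_time j' \<noteq> topple_time k"
      "topple_time j \<noteq> topple_time k'"
    using j'k' topple_time_row_neq_col by auto
  then show ?thesis
    using S T_iff_topple_time_less[OF cell] by (auto simp: suppl_iff)
qed

lemma gap_imp_corner_cells:
  assumes cell: "is_cell n R j k"
    and gap: "topple_time k + 3 \<le> topple_time j \<or> topple_time j + 3 \<le> topple_time k"
  shows "\<exists>j' k'. is_cell n R j' k' \<and> j' \<noteq> j \<and> k' \<noteq> k \<and>
      (\<not> T j k \<longrightarrow> T j' k' \<and> is_cell n R j k' \<and> \<not> T j k' \<and> \<not> suppl n R T j' k) \<and>
      (T j k \<longrightarrow> \<not> T j' k' \<and> is_cell n R j' k \<and> T j' k \<and> suppl n R T j k')"
proof (cases "T j k")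
  case False
  then have "topple_time k + 3 \<le> topple_time j"
    using gap T_iff_topple_time_less[OF cell] by auto
  moreover have j: "j \<in> R" "j \<le> n" using cellD[OF cell] in_R_le by auto
  ultimately obtain r c where arcs: "arc r c" "arc c j"
    and times: "topple_time r + 2 = topple_time j" "topple_time c + 1 = topple_time j"
    by (auto elim: grandparent_exists)
  have jc: "is_cell n R j c" "\<not> T j c" using arcs(2) j arc_into_row by auto
  then have rc: "is_cell n R r c" "T r c" using arcs(1) cellD arc_into_colset by auto
  have "r \<noteq> j" "c \<noteq> k" "\<not> suppl n R T r k"
    using times \<open>topple_time k + 3 \<le> topple_time j\<close> by (auto simp: suppl_iff)
  then show ?thesis using False jc rc by blast
next
  case True
  then have "topple_time j + 3 \<le> topple_time k"
    using gap T_iff_topple_time_less[OF cell] by auto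
  moreover have k: "k \<in> colset n R" "k \<le> n" using cellD[OF cell] in_colset_le by auto
  ultimately obtain c r where arcs: "arc c r" "arc r k"
    and times: "topple_time c + 2 = topple_time k" "topple_time r + 1 = topple_time k"
    by (auto elim: grandparent_exists)
  have rk: "is_cell n R r k" "T r k" using arcs(2) k arc_into_colset by auto
  then have rc: "is_cell n R r c" "\<not> T r c" using arcs(1) cellD arc_into_row by auto
  have "r \<noteq> j" "c \<noteq> k" "suppl n R T j c"
    using times \<open>topple_time j + 3 \<le> topple_time k\<close> by (auto simp: suppl_iff)
  then show ?thesis using True rk rc by blast
qed

lemma corner_cells_imp_cornersupport:
  assumes cell: "is_cell n R j k"
    and "\<exists>j' k'. is_cell n R j' k' \<and> j' \<noteq> j \<and> k' \<noteq> k \<and>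
      (\<not> T j k \<longrightarrow> T j' k' \<and> is_cell n R j k' \<and> \<not> T j k' \<and> \<not> suppl n R T j' k) \<and>
      (T j k \<longrightarrow> \<not> T j' k' \<and> is_cell n R j' k \<and> T j' k \<and> suppl n R T j k')"
  shows "cornersupport n R T j k"
proof -
  obtain j' k' where cell': "is_cell n R j' k'" and "j' \<noteq> j" "k' \<noteq> k"
    and zero: "\<not> T j k \<longrightarrow> T j' k' \<and> is_cell n R j k' \<and> \<not> T j k' \<and> \<not> suppl n R T j' k"
    and one: "T j k \<longrightarrow> \<not> T j' k' \<and> is_cell n R j' k \<and> T j' k \<and> suppl n R T j k'"
    using assms(2) by blast
  have S_cell: "suppl n R T a b \<longleftrightarrow> T a b" if "is_cell n R a b" for a b
    using T_iff_topple_time_less[OF that] by (simp add: suppl_iff)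
  show ?thesis
    unfolding cornersupport_def
  proof (intro bexI conjI)
    show "j' \<in> R" "k' \<in> colset n R" using cellD[OF cell'] by auto
    show "j' \<noteq> j" "k' \<noteq> k" by fact+
    show "suppl n R T j' k' \<noteq> T j k" using zero one S_cell[OF cell'] by auto
    show "suppl n R T j' k = T j k" "suppl n R T j k' = T j k" using zero one S_cell by auto
  qed
qed

end

theorem corollary4p18:
  assumes "ferrers n R"
    and "T \<in> EWtab n R"
    and "is_cell n R j k"
  shows "cornersupport n R T j k \<longleftrightarrow>
    (\<exists>j' k'. is_cell n R j' k' \<and> j' \<noteq> j \<and> k' \<noteq> k \<and>
      (\<not> T j k \<longrightarrow> T j' k' \<and> is_cell n R j k' \<and> \<not> T j k' \<and> \<not> suppl n R T j' k) \<and>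
      (T j k \<longrightarrow> \<not> T j' k' \<and> is_cell n R j' k \<and> T j' k \<and> suppl n R T j k'))"
proof -
  interpret ew_tableau n R T using assms(1,2) by unfold_locales
  show ?thesis
    using cornersupport_imp_gap gap_imp_corner_cells corner_cells_imp_cornersupport assms(3)
    by blast
qed

end
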